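(* Let $K$ be a commutative unital ring, $k,n\in\mathbb{N}^*$, $\bar a,\bar b=(b_1,\dots,b_k),\bar c=(c_1,\dots,c_k)\in K^k$, $n=mk+r$ with $0\le r<k$, $d_i:=b_ic_i$, $\bar d:=(d_1,\dots,d_k)$. Suppose that for some $q\ge1$ and indices $1\le i_1<i_2<\dots<i_q\le k$ with $n>i_1$ we have $b_{i_1}=\dots=b_{i_q}=0$, or $c_{i_1}=\dots=c_{i_q}=0$. Put $i_{q+1}:=i_1+k$, $i_0:=i_q$. If $r\le i_1$ let $r':=r+k$ and $p:=0$; otherwise let $r':=r$ and let $p\in\mathbb{N}^*$ be such that $i_p<r\le i_{p+1}$. For $1\le j<q$ let $m_j:=1$ if $j<p$ and $m_j:=0$ if $j\ge p$; let $m_q:=0$ if $p>0$ or $m=0$, and $m_q:=-1$ if $p=0$. Then \[\det T^k_n(\bar a,\bar b,\bar c)=\alpha^{\bar a,-\bar d}(i_1,k)\prod_{j=1}^{q}\big(\alpha^{\bar a,-\bar d}_{i_j}(i_{j+1}-i_j,k)\big)^{m+m_j}\,\alpha^{\bar a,-\bar d}_{i_p}(r'-i_p,k).\]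
   Context: Vectors in $K^k$ are extended periodically, $-\bar d$ componentwise. $T^k_n(\bar a,\bar b,\bar c)\in M_n(K)$ is the tridiagonal matrix with diagonal $a_1,\dots,a_n$, superdiagonal $b_1,\dots,b_{n-1}$, subdiagonal $c_1,\dots,c_{n-1}$ (periodic indices), zeros elsewhere. In $P=\mathbb{Z}[x_1,\dots,x_k,y_1,\dots,y_k]$, indices are periodic; shift $f_s:=f(x_{s+1},\dots,x_{s+k},y_{s+1},\dots,y_{s+k})$; $f^{\bar a,\bar e}$ is the image under $x_i\mapsto a_i$, $y_i\mapsto e_i$, and $f_s^{\bar a,\bar e}:=(f_s)^{\bar a,\bar e}$. Write $[r]=\{1,\dots,r\}$, $S+1=\{s+1:s\in S\}$. For $0\le r\le k$, $\alpha(r,k):=\sum_{S}\prod_{i\in S}y_i\prod_{j\in[r]\setminus(S\cup(S+1))}x_j$ over subsets $S\subseteq\{1,\dots,r-1\}$ with no two consecutive integers; $\alpha(-1,k):=0$; for $r>k$, $\alpha(r,k):=x_r\alpha(r-1,k)+y_{r-1}\alpha(r-2,k)$; $\alpha_s(r,k):=(\alpha(r,k))_s$. *)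

theory Defs
  imports "Jordan_Normal_Form.Determinant"
begin

text \<open>Vectors in K^k are functions nat => 'a, meaningful on the indices 1..k.
  Periodic extension: index i (i >= 1) refers to component ((i - 1) mod k) + 1.\<close>
definition per :: "nat \<Rightarrow> (nat \<Rightarrow> 'a) \<Rightarrow> nat \<Rightarrow> 'a" where
  "per k v i = v ((i - 1) mod k + 1)"

text \<open>The tridiagonal matrix T^k_n(a,b,c) (1-indexed entries, periodic vectors):
  diagonal a_1..a_n, superdiagonal b_1..b_(n-1), subdiagonal c_1..c_(n-1).\<close>
definition tridiag :: "nat \<Rightarrow> nat \<Rightarrow> (nat \<Rightarrow> 'a::zero) \<Rightarrow> (nat \<Rightarrow> 'a) \<Rightarrow> (nat \<Rightarrow> 'a) \<Rightarrow> 'a mat" where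
  "tridiag k n a b c = mat n n (\<lambda>(i, j).
     if i = j then per k a (i + 1)
     else if j = i + 1 then per k b (i + 1)
     else if i = j + 1 then per k c (j + 1)
     else 0)"

text \<open>alpha(r,k) evaluated at x_j := x j, y_j := y j (x, y give the values of all
  periodically-indexed variables). Since evaluation is a ring homomorphism this is
  the image of the integer polynomial alpha(r,k).\<close>
function alpha :: "nat \<Rightarrow> (nat \<Rightarrow> 'a::comm_ring_1) \<Rightarrow> (nat \<Rightarrow> 'a) \<Rightarrow> nat \<Rightarrow> 'a" where
  "alpha k x y r =
     (if r \<le> k then
        (\<Sum>S\<in>{S. S \<subseteq> {1..<r} \<and> (\<forall>i\<in>S. i + 1 \<notin> S)}.
            (\<Prod>i\<in>S. y i) * (\<Prod>j\<in>{1..r} - (S \<union> (\<lambda>s. s + 1) ` S). x j))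
      else x r * alpha k x y (r - 1) + y (r - 1) * alpha k x y (r - 2))"
  by pat_completeness auto
termination by (relation "measure (\<lambda>(k, x, y, r). r)") auto

definition alpha_ev :: "nat \<Rightarrow> (nat \<Rightarrow> 'a::comm_ring_1) \<Rightarrow> (nat \<Rightarrow> 'a) \<Rightarrow> nat \<Rightarrow> nat \<Rightarrow> 'a" where
  "alpha_ev k a e s r = alpha k (\<lambda>j. per k a (s + j)) (\<lambda>j. per k e (s + j)) r"

end

theory Submission
  imports Defs
begin

(* The determinant of a tridiagonal matrix and the polynomial alpha obey the same three-term
   recurrence, so both are the continuant of the diagonal entries a_j and the couplings -b_j c_j.
   A continuant factors at every position where the coupling vanishes. Here it vanishes at
   i_1 < ... < i_q and, by periodicity, at their translates by multiples of k; hence the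
   determinant splits into the initial block of length i_1, copies of the blocks between
   consecutive vanishing positions (block j occurring m + m_j times) and a final partial block
   starting at i_p. *)

declare alpha.simps [simp del]

fun continuant :: "(nat \<Rightarrow> 'a::comm_ring_1) \<Rightarrow> (nat \<Rightarrow> 'a) \<Rightarrow> nat \<Rightarrow> 'a" where
  "continuant x y 0 = 1"
| "continuant x y (Suc 0) = x 1"
| "continuant x y (Suc (Suc L)) =
    x (L + 2) * continuant x y (Suc L) + y (Suc L) * continuant x y L"

lemma continuant_cong:
  assumes "\<And>j. 1 \<le> j \<Longrightarrow> x j = x' j" and "\<And>j. 1 \<le> j \<Longrightarrow> y j = y' j"
  shows "continuant x y L = continuant x' y' L"
  by (induction L rule: induct_nat_012) (simp_all add: assms)

lemma continuant_split:
  assumes "y L1 = 0"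
  shows "continuant x y (L1 + L2) =
    continuant x y L1 * continuant (\<lambda>j. x (L1 + j)) (\<lambda>j. y (L1 + j)) L2"
proof (induction L2 rule: induct_nat_012)
  case 1
  with assms show ?case by (cases L1) simp_all
next
  case (ge2 L)
  then show ?case by (simp add: algebra_simps)
qed simp

(* S encodes the matching {{s, s + 1} | s. s \<in> S} of the path 1 - 2 - ... - r. *)
definition path_matchings :: "nat \<Rightarrow> nat set set" where
  "path_matchings r = {S. S \<subseteq> {1..<r} \<and> (\<forall>i\<in>S. i + 1 \<notin> S)}"

definition matching_sum :: "(nat \<Rightarrow> 'a::comm_ring_1) \<Rightarrow> (nat \<Rightarrow> 'a) \<Rightarrow> nat \<Rightarrow> 'a" where
  "matching_sum x y r = (\<Sum>S\<in>path_matchings r.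
     (\<Prod>i\<in>S. y i) * (\<Prod>j\<in>{1..r} - (S \<union> (\<lambda>s. s + 1) ` S). x j))"

lemma finite_path_matchings: "finite (path_matchings r)"
  unfolding path_matchings_def by (rule finite_subset[of _ "Pow {1..<r}"]) auto

lemma path_matchings_Suc_Suc:
  "path_matchings (Suc (Suc r)) = path_matchings (Suc r) \<union> insert (Suc r) ` path_matchings r"
proof
  show "path_matchings (Suc (Suc r)) \<subseteq> path_matchings (Suc r) \<union> insert (Suc r) ` path_matchings r"
  proof
    fix S assume S: "S \<in> path_matchings (Suc (Suc r))"
    show "S \<in> path_matchings (Suc r) \<union> insert (Suc r) ` path_matchings r"
    proof (cases "Suc r \<in> S")
      case True
      then have "r \<notin> S" using S unfolding path_matchings_def by auto
      then have "S - {Suc r} \<in> path_matchings r"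
        using S unfolding path_matchings_def by (auto simp: less_Suc_eq)
      moreover have "S = insert (Suc r) (S - {Suc r})" using True by auto
      ultimately show ?thesis by blast
    qed (use S in \<open>auto simp: path_matchings_def less_Suc_eq\<close>)
  qed
qed (auto simp: path_matchings_def)

lemma matching_sum_Suc_Suc:
  "matching_sum x y (Suc (Suc r)) =
    x (r + 2) * matching_sum x y (Suc r) + y (Suc r) * matching_sum x y r"
proof -
  let ?t = "\<lambda>l S. (\<Prod>i\<in>S. y i) * (\<Prod>j\<in>{1..l} - (S \<union> (\<lambda>s. s + 1) ` S). x j)"
  have disjoint: "path_matchings (Suc r) \<inter> insert (Suc r) ` path_matchings r = {}"
    unfolding path_matchings_def by auto
  have inj: "inj_on (insert (Suc r)) (path_matchings r)"
  proof (rule inj_onI)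
    fix S T assume "S \<in> path_matchings r" "T \<in> path_matchings r"
      and "insert (Suc r) S = insert (Suc r) T"
    moreover from calculation(1,2) have "Suc r \<notin> S" "Suc r \<notin> T"
      unfolding path_matchings_def by auto
    ultimately show "S = T" by (metis Diff_insert_absorb)
  qed
  have last_free: "?t (Suc (Suc r)) S = x (r + 2) * ?t (Suc r) S"
    if "S \<in> path_matchings (Suc r)" for S
  proof -
    have "{1..Suc (Suc r)} - (S \<union> (\<lambda>s. s + 1) ` S)
        = insert (Suc (Suc r)) ({1..Suc r} - (S \<union> (\<lambda>s. s + 1) ` S))"
      using that unfolding path_matchings_def by auto
    then show ?thesis by (simp add: algebra_simps)
  qed
  have last_edge: "?t (Suc (Suc r)) (insert (Suc r) S) = y (Suc r) * ?t r S"
    if "S \<in> path_matchings r" for S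
  proof -
    have "finite S" "Suc r \<notin> S"
      using that unfolding path_matchings_def by (auto intro: finite_subset)
    moreover have "{1..Suc (Suc r)} - (insert (Suc r) S \<union> (\<lambda>s. s + 1) ` insert (Suc r) S)
        = {1..r} - (S \<union> (\<lambda>s. s + 1) ` S)"
      using that unfolding path_matchings_def by auto
    ultimately show ?thesis by (simp add: algebra_simps)
  qed
  have "matching_sum x y (Suc (Suc r)) = (\<Sum>S\<in>path_matchings (Suc r). ?t (Suc (Suc r)) S)
      + (\<Sum>S\<in>insert (Suc r) ` path_matchings r. ?t (Suc (Suc r)) S)"
    unfolding matching_sum_def path_matchings_Suc_Suc
    by (rule sum.union_disjoint) (use finite_path_matchings disjoint in auto)
  also have "(\<Sum>S\<in>path_matchings (Suc r). ?t (Suc (Suc r)) S) = x (r + 2) * matching_sum x y (Suc r)"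
    unfolding matching_sum_def sum_distrib_left by (rule sum.cong[OF refl last_free])
  also have "(\<Sum>S\<in>insert (Suc r) ` path_matchings r. ?t (Suc (Suc r)) S) = y (Suc r) * matching_sum x y r"
    unfolding sum.reindex[OF inj] matching_sum_def sum_distrib_left o_def
    by (rule sum.cong[OF refl last_edge])
  finally show ?thesis .
qed

lemma matching_sum_eq_continuant: "matching_sum x y r = continuant x y r"
proof (induction r rule: induct_nat_012)
  case 0
  have "path_matchings 0 = {{}}" by (auto simp: path_matchings_def)
  then show ?case by (simp add: matching_sum_def)
next
  case 1
  have "path_matchings 1 = {{}}" by (auto simp: path_matchings_def)
  then show ?case by (simp add: matching_sum_def)
next
  case (ge2 r)
  then show ?case by (simp add: matching_sum_Suc_Suc)
qed

lemma alpha_eq_matching_sum: "r \<le> k \<Longrightarrow> alpha k x y r = matching_sum x y r"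
  by (subst alpha.simps) (simp add: matching_sum_def path_matchings_def)

lemma alpha_eq_continuant:
  assumes "k \<ge> 1"
  shows "alpha k x y r = continuant x y r"
proof (induction r rule: induct_nat_012)
  case (ge2 r)
  show ?case
  proof (cases "Suc (Suc r) \<le> k")
    case True
    then show ?thesis by (simp add: alpha_eq_matching_sum matching_sum_eq_continuant)
  next
    case False
    then show ?thesis using ge2 by (subst alpha.simps) simp
  qed
qed (use assms in \<open>simp_all add: alpha_eq_matching_sum matching_sum_eq_continuant\<close>)

definition tridiagonal ::
  "(nat \<Rightarrow> 'a::zero) \<Rightarrow> (nat \<Rightarrow> 'a) \<Rightarrow> (nat \<Rightarrow> 'a) \<Rightarrow> nat \<Rightarrow> 'a mat" where
  "tridiagonal A B C L = mat L L (\<lambda>(i, j). if i = j then A i else if j = i + 1 then B i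
      else if i = j + 1 then C j else 0)"

lemma det_tridiagonal_Suc_Suc:
  "det (tridiagonal A B C (Suc (Suc L))) =
    A (Suc L) * det (tridiagonal A B C (Suc L)) - B L * C L * det (tridiagonal A B C L)"
proof -
  let ?T = "tridiagonal A B C (Suc (Suc L))"
  have T: "?T \<in> carrier_mat (Suc (Suc L)) (Suc (Suc L))" by (simp add: tridiagonal_def)
  have "det ?T = (\<Sum>j<Suc (Suc L). ?T $$ (Suc L, j) * cofactor ?T (Suc L) j)"
    by (rule laplace_expansion_row[OF T]) simp
  also have "\<dots> = ?T $$ (Suc L, L) * cofactor ?T (Suc L) L
      + ?T $$ (Suc L, Suc L) * cofactor ?T (Suc L) (Suc L)"
  proof -
    have "(\<Sum>j<L. ?T $$ (Suc L, j) * cofactor ?T (Suc L) j) = 0"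
      by (rule sum.neutral) (auto simp: tridiagonal_def)
    then show ?thesis by (simp add: lessThan_Suc)
  qed
  also have "?T $$ (Suc L, Suc L) = A (Suc L)" by (simp add: tridiagonal_def)
  also have "?T $$ (Suc L, L) = C L" by (simp add: tridiagonal_def)
  also have "mat_delete ?T (Suc L) (Suc L) = tridiagonal A B C (Suc L)"
    by (rule eq_matI) (auto simp: tridiagonal_def mat_delete_def)
  hence "cofactor ?T (Suc L) (Suc L) = det (tridiagonal A B C (Suc L))"
    by (simp add: cofactor_def)
  also have "cofactor ?T (Suc L) L = - (B L * det (tridiagonal A B C L))"
  proof -
    let ?M = "mat_delete ?T (Suc L) L"
    have M: "?M \<in> carrier_mat (Suc L) (Suc L)" by (simp add: tridiagonal_def mat_delete_def)
    have "det ?M = (\<Sum>i<Suc L. ?M $$ (i, L) * cofactor ?M i L)"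
      by (rule laplace_expansion_column[OF M]) simp
    also have "\<dots> = ?M $$ (L, L) * cofactor ?M L L"
    proof -
      have "(\<Sum>i<L. ?M $$ (i, L) * cofactor ?M i L) = 0"
        by (rule sum.neutral) (auto simp: tridiagonal_def mat_delete_def)
      then show ?thesis by (simp add: lessThan_Suc)
    qed
    also have "?M $$ (L, L) = B L" by (simp add: tridiagonal_def mat_delete_def)
    also have "mat_delete ?M L L = tridiagonal A B C L"
      by (rule eq_matI) (auto simp: tridiagonal_def mat_delete_def)
    hence "cofactor ?M L L = det (tridiagonal A B C L)"
      by (simp add: cofactor_def)
    finally have "det ?M = B L * det (tridiagonal A B C L)" .
    moreover have "(-1::'a) ^ (Suc L + L) = -1"
      by (simp add: power_add flip: power_mult_distrib)
    ultimately show ?thesis by (simp add: cofactor_def)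
  qed
  finally show ?thesis by (simp add: algebra_simps)
qed

lemma det_tridiagonal_eq_continuant:
  "det (tridiagonal A B C L) = continuant (\<lambda>j. A (j - 1)) (\<lambda>j. - (B (j - 1) * C (j - 1))) L"
proof (induction L rule: induct_nat_012)
  case 0
  show ?case by (simp add: det_dim_zero tridiagonal_def)
next
  case 1
  show ?case by (subst det_single) (auto simp: tridiagonal_def)
next
  case (ge2 L)
  then show ?case by (simp add: det_tridiagonal_Suc_Suc)
qed

lemma per_add_period:
  assumes "1 \<le> j"
  shows "per k v (j + k) = per k v j"
proof -
  from assms have "j + k - 1 = (j - 1) + k" by simp
  then show ?thesis unfolding per_def by simp
qed

lemma per_eq: "1 \<le> j \<Longrightarrow> j \<le> k \<Longrightarrow> per k v j = v j"
  by (simp add: per_def)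

lemma alpha_ev_0: "alpha_ev k a e s 0 = 1"
  by (simp add: alpha_ev_def alpha_eq_matching_sum matching_sum_eq_continuant)

lemma alpha_ev_eq_continuant:
  "k \<ge> 1 \<Longrightarrow> alpha_ev k a e s L = continuant (\<lambda>j. per k a (s + j)) (\<lambda>j. per k e (s + j)) L"
  by (simp add: alpha_ev_def alpha_eq_continuant)

lemma det_tridiag_eq_alpha_ev:
  assumes "k \<ge> 1"
  shows "det (tridiag k n a b c) = alpha_ev k a (\<lambda>j. - (b j * c j)) 0 n"
proof -
  have "tridiag k n a b c =
      tridiagonal (\<lambda>i. per k a (i + 1)) (\<lambda>i. per k b (i + 1)) (\<lambda>i. per k c (i + 1)) n"
    by (rule eq_matI) (auto simp: tridiag_def tridiagonal_def)
  then show ?thesis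
    by (simp add: det_tridiagonal_eq_continuant alpha_ev_eq_continuant[OF assms])
      (rule continuant_cong; simp add: per_def)
qed

lemma alpha_ev_split:
  assumes "k \<ge> 1" and "per k e (s + L1) = 0"
  shows "alpha_ev k a e s (L1 + L2) = alpha_ev k a e s L1 * alpha_ev k a e (s + L1) L2"
  using continuant_split[of "\<lambda>j. per k e (s + j)" L1 "\<lambda>j. per k a (s + j)" L2] assms
  by (simp add: alpha_ev_eq_continuant add.assoc)

lemma alpha_ev_periodic:
  assumes "k \<ge> 1"
  shows "alpha_ev k a e (s + k) L = alpha_ev k a e s L"
  unfolding alpha_ev_eq_continuant[OF assms]
  by (rule continuant_cong) (metis per_add_period add.commute add.left_commute le_add2 order_trans)+

lemma mono_on_cyclic_indices:
  fixes i :: "nat \<Rightarrow> nat"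
  assumes "\<forall>j. 1 \<le> j \<and> j < q \<longrightarrow> i j < i (j + 1)" and "i q \<le> k" and "i (q + 1) = i 1 + k"
  shows "mono_on {1..Suc q} i"
proof (rule mono_onI)
  have step: "i j \<le> i (Suc j)" if "j \<in> {1..q}" for j
  proof (cases "j < q")
    case True
    with that assms(1) show ?thesis by fastforce
  next
    case False
    with that have "j = q" by simp
    with assms(2,3) show ?thesis by simp
  qed
  fix r s assume rs: "r \<in> {1..Suc q}" "s \<in> {1..Suc q}" "r \<le> s"
  show "i r \<le> i s"
    by (rule lift_Suc_mono_le_ivl[where N = "{1..q}" and f = i, OF step]) (use rs in auto)
qed

lemma telescope_at_breakpoints:
  fixes D :: "nat \<Rightarrow> nat \<Rightarrow> 'a::comm_monoid_mult"
  assumes split: "\<And>s L1 L2. s + L1 \<in> Z \<Longrightarrow> D s (L1 + L2) = D s L1 * D (s + L1) L2"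
    and "1 \<le> j" and "mono_on {1..j} i" and "\<And>l. 1 < l \<Longrightarrow> l \<le> j \<Longrightarrow> i l \<in> Z"
  shows "D (i 1) (i j - i 1 + L) = (\<Prod>l\<in>{1..<j}. D (i l) (i (Suc l) - i l)) * D (i j) L"
  using assms(2-4)
proof (induction j arbitrary: L rule: nat_induct_at_least)
  case (Suc j)
  have "i 1 \<le> i j" "i j \<le> i (Suc j)"
    using Suc.hyps Suc.prems(1) by (auto intro: mono_onD)
  then have "i (Suc j) - i 1 + L = (i j - i 1) + ((i (Suc j) - i j) + L)" by arith
  then have "D (i 1) (i (Suc j) - i 1 + L) = D (i 1) ((i j - i 1) + ((i (Suc j) - i j) + L))"
    by (simp only:)
  also have "\<dots> = (\<Prod>l\<in>{1..<j}. D (i l) (i (Suc l) - i l)) * D (i j) ((i (Suc j) - i j) + L)"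
    using Suc.prems by (intro Suc.IH) (auto elim: mono_on_subset)
  also have "D (i j) ((i (Suc j) - i j) + L) = D (i j) (i (Suc j) - i j) * D (i (Suc j)) L"
    using split[of "i j" "i (Suc j) - i j"] Suc.hyps Suc.prems(2)[of "Suc j"] \<open>i j \<le> i (Suc j)\<close>
    by simp
  finally show ?case
    using Suc.hyps by (simp add: prod.atLeastLessThan_Suc mult.assoc)
qed simp

lemma power_of_period:
  fixes D :: "nat \<Rightarrow> 'a::monoid_mult"
  assumes "\<And>L. D (k + L) = D k * D L"
  shows "D (t * k + L) = D k ^ t * D L"
  by (induction t) (simp_all add: assms add.assoc mult.assoc)

lemma alpha_ev_telescope:
  assumes "k \<ge> 1" and "1 \<le> j" and "mono_on {1..j} i"
    and "\<And>l. 1 < l \<Longrightarrow> l \<le> j \<Longrightarrow> per k e (i l) = 0"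
  shows "alpha_ev k a e (i 1) (i j - i 1 + L) =
    (\<Prod>l\<in>{1..<j}. alpha_ev k a e (i l) (i (Suc l) - i l)) * alpha_ev k a e (i j) L"
proof (rule telescope_at_breakpoints[where D = "alpha_ev k a e" and Z = "{z. per k e z = 0}"])
  show "alpha_ev k a e s (L1 + L2) = alpha_ev k a e s L1 * alpha_ev k a e (s + L1) L2"
    if "s + L1 \<in> {z. per k e z = 0}" for s L1 L2
    using alpha_ev_split[OF assms(1)] that by simp
qed (use assms in auto)

lemma alpha_ev_power_period:
  assumes "k \<ge> 1" and "1 \<le> s" and "per k e s = 0"
  shows "alpha_ev k a e s (t * k + L) = alpha_ev k a e s k ^ t * alpha_ev k a e s L"
proof (rule power_of_period)
  fix L
  have "per k e (s + k) = 0" using assms(2,3) by (simp add: per_add_period)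
  then show "alpha_ev k a e s (k + L) = alpha_ev k a e s k * alpha_ev k a e s L"
    by (simp add: alpha_ev_split[OF assms(1)] alpha_ev_periodic[OF assms(1)])
qed

lemma per_vanishes_at_indices:
  assumes "1 \<le> i 1" and "mono_on {1..Suc q} i" and "i q \<le> k" and "i (q + 1) = i 1 + k"
    and "q \<ge> 1" and "\<forall>j\<in>{1..q}. e (i j) = 0" and "1 \<le> l" and "l \<le> Suc q"
  shows "per k e (i l) = 0"
proof -
  have "1 \<le> i l'" "i l' \<le> k" "e (i l') = 0" if "1 \<le> l'" "l' \<le> q" for l'
    using that assms(1,3,6) mono_onD[OF assms(2), of 1 l'] mono_onD[OF assms(2), of l' q] by auto
  then show ?thesis
    using assms(4,5,7,8) by (cases "l = Suc q") (auto simp: per_eq per_add_period)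
qed

lemma prod_power_add_indicator:
  fixes F :: "nat \<Rightarrow> 'a::comm_semiring_1"
  assumes "j \<le> Suc q"
  shows "(\<Prod>l=1..q. F l ^ (t + (if l < j then 1 else 0))) = (\<Prod>l=1..q. F l) ^ t * (\<Prod>l\<in>{1..<j}. F l)"
proof -
  have "F l ^ (t + (if l < j then 1 else 0)) = F l ^ t * (if l < j then F l else 1)" for l
    by (simp add: power_add)
  then have "(\<Prod>l=1..q. F l ^ (t + (if l < j then 1 else 0)))
      = (\<Prod>l=1..q. F l) ^ t * (\<Prod>l=1..q. if l < j then F l else 1)"
    by (simp add: prod.distrib prod_power_distrib)
  also have "(\<Prod>l=1..q. if l < j then F l else 1) = (\<Prod>l\<in>{l\<in>{1..q}. l < j}. F l)"
    by (rule prod.inter_filter[symmetric]) simp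
  also have "{l\<in>{1..q}. l < j} = {1..<j}"
    using assms by auto
  finally show ?thesis .
qed

(* For p = 0 the remainder r is absorbed into the last period, so there are only m - 1 full
   periods and the final partial block starts at i_q = i_0. *)
lemma block_counts:
  fixes i :: "nat \<Rightarrow> nat" and mj :: "nat \<Rightarrow> int"
  assumes "m = n div k" and "r = n mod k" and "q \<ge> 1" and "mono_on {1..Suc q} i" and "i q \<le> k"
    and "n > i 1" and "i 0 = i q"
    and "(r \<le> i 1 \<and> r' = r + k \<and> p = 0) \<or>
         (\<not> r \<le> i 1 \<and> r' = r \<and> 1 \<le> p \<and> p \<le> q \<and> i p < r \<and> r \<le> i (p + 1))"
    and "\<forall>j. 1 \<le> j \<and> j < q \<longrightarrow> mj j = (if j < p then 1 else 0)"
    and "mj q = (if p > 0 \<or> m = 0 then 0 else -1)"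
  obtains t j where "1 \<le> j" and "j \<le> q" and "i p = i j"
    and "n - i 1 = t * k + (i j - i 1 + (r' - i j))"
    and "\<And>l. l \<in> {1..q} \<Longrightarrow> nat (int m + mj l) = t + (if l < j then 1 else 0)"
proof -
  have n: "n = m * k + r" using assms(1,2) by simp
  from assms(8) show thesis
  proof
    assume case0: "r \<le> i 1 \<and> r' = r + k \<and> p = 0"
    with n assms(6) obtain t where m: "m = Suc t" by (cases m) auto
    have "i 1 \<le> i q" using assms(3) by (intro mono_onD[OF assms(4)]) auto
    with case0 m n assms(5) have "n - i 1 = t * k + (i q - i 1 + (r' - i q))" by auto
    moreover have "nat (int m + mj l) = t + (if l < q then 1 else 0)" if "l \<in> {1..q}" for l
      using that case0 m assms(9,10) by (cases "l < q") auto
    ultimately show thesis using that[of q t] assms(3,7) case0 by auto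
  next
    assume case1: "\<not> r \<le> i 1 \<and> r' = r \<and> 1 \<le> p \<and> p \<le> q \<and> i p < r \<and> r \<le> i (p + 1)"
    have "i 1 \<le> i p" using case1 by (intro mono_onD[OF assms(4)]) auto
    with case1 n have "n - i 1 = m * k + (i p - i 1 + (r' - i p))" by auto
    moreover have "nat (int m + mj l) = m + (if l < p then 1 else 0)" if "l \<in> {1..q}" for l
      using that case1 assms(9,10) by (cases "l < q") auto
    ultimately show thesis using that[of p m] case1 by auto
  qed
qed

theorem corollary5p6:
  fixes a b c :: "nat \<Rightarrow> 'a::comm_ring_1"
    and k n m r q p r' :: nat
    and i :: "nat \<Rightarrow> nat"
    and mj :: "nat \<Rightarrow> int"
  assumes "k \<ge> 1" and "n \<ge> 1"
    and "m = n div k" and "r = n mod k"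
    and "q \<ge> 1"
    and "1 \<le> i 1" and "\<forall>j. 1 \<le> j \<and> j < q \<longrightarrow> i j < i (j + 1)" and "i q \<le> k"
    and "n > i 1"
    and "(\<forall>j\<in>{1..q}. b (i j) = 0) \<or> (\<forall>j\<in>{1..q}. c (i j) = 0)"
    and "i (q + 1) = i 1 + k" and "i 0 = i q"
    and "(r \<le> i 1 \<and> r' = r + k \<and> p = 0) \<or>
         (\<not> r \<le> i 1 \<and> r' = r \<and> 1 \<le> p \<and> p \<le> q \<and> i p < r \<and> r \<le> i (p + 1))"
    and "\<forall>j. 1 \<le> j \<and> j < q \<longrightarrow> mj j = (if j < p then 1 else 0)"
    and "mj q = (if p > 0 \<or> m = 0 then 0 else -1)"
  shows "det (tridiag k n a b c) =
     alpha_ev k a (\<lambda>j. - (b j * c j)) 0 (i 1)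
     * (\<Prod>j = 1..q. alpha_ev k a (\<lambda>j. - (b j * c j)) (i j) (i (j + 1) - i j)
                     ^ nat (int m + mj j))
     * alpha_ev k a (\<lambda>j. - (b j * c j)) (i p) (r' - i p)"
proof -
  let ?e = "\<lambda>j. - (b j * c j)"
  let ?D = "alpha_ev k a ?e"
  let ?F = "\<lambda>l. ?D (i l) (i (Suc l) - i l)"
  have mono: "mono_on {1..Suc q} i"
    using assms(7,8,11) by (rule mono_on_cyclic_indices)
  have vanishes: "per k ?e (i l) = 0" if "1 \<le> l" "l \<le> Suc q" for l
    using per_vanishes_at_indices[where e = ?e, OF assms(6) mono assms(8,11,5) _ that] assms(10)
    by auto
  have telescope: "?D (i 1) (i j - i 1 + L) = (\<Prod>l\<in>{1..<j}. ?F l) * ?D (i j) L"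
    if "1 \<le> j" "j \<le> Suc q" for j L
    by (rule alpha_ev_telescope[OF assms(1) that(1)])
      (use that in \<open>auto intro: mono_on_subset[OF mono] vanishes\<close>)
  have full_period: "?D (i 1) k = (\<Prod>l=1..q. ?F l)"
    using telescope[of "Suc q" 0] assms(11) by (simp add: atLeastLessThanSuc_atLeastAtMost alpha_ev_0)
  obtain t j where j: "1 \<le> j" "j \<le> q" "i p = i j"
    and length: "n - i 1 = t * k + (i j - i 1 + (r' - i j))"
    and exponents: "\<And>l. l \<in> {1..q} \<Longrightarrow> nat (int m + mj l) = t + (if l < j then 1 else 0)"
    using block_counts[OF assms(3-5) mono assms(8,9,12-15)] by blast
  have "det (tridiag k n a b c) = ?D 0 (i 1) * ?D (i 1) (n - i 1)"
    using alpha_ev_split[OF assms(1), of ?e 0 "i 1" a "n - i 1"] vanishes[of 1] assms(9)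
    by (simp add: det_tridiag_eq_alpha_ev[OF assms(1)])
  also have "?D (i 1) (n - i 1) = (\<Prod>l=1..q. ?F l) ^ t * (\<Prod>l\<in>{1..<j}. ?F l) * ?D (i j) (r' - i j)"
    unfolding length full_period
      alpha_ev_power_period[OF assms(1,6) vanishes[OF order_refl le_SucI[OF assms(5)]]]
      telescope[OF j(1) le_SucI[OF j(2)]] by (simp add: mult.assoc)
  also have "(\<Prod>l=1..q. ?F l) ^ t * (\<Prod>l\<in>{1..<j}. ?F l)
      = (\<Prod>l=1..q. ?F l ^ (t + (if l < j then 1 else 0)))"
    using j by (intro prod_power_add_indicator[symmetric]) simp
  also have "\<dots> = (\<Prod>l=1..q. ?F l ^ nat (int m + mj l))"
    by (rule prod.cong) (simp_all add: exponents)
  finally show ?thesis using j by (simp add: mult.assoc)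
qed

end
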